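(* Let $S\subseteq\{0,1\}^n$ be the vertex set of an acute $0/1$-simplex in $[0,1]^n$ with $k$ vertices. If $\hat S$ is the vertex set of an acute $0/1$-simplex in $[0,1]^n$ having $\mathrm{conv}(S)$ as a facet (face), then each vertex of $\hat S$ belongs to $S$ or to $\mathcal{A}^n(S)$.
   Context: A set of $j+1$ affinely independent points $a_0,\dots,a_j\in\{0,1\}^n$ is the vertex set of an acute $0/1$-$j$-simplex if all dihedral angles of their convex hull are acute; equivalently, with $P=[a_1-a_0,\dots,a_j-a_0]$ and $G=P^\top P$, every off-diagonal entry of $G^{-1}$ is negative and every row sum of $G^{-1}$ is positive. For the vertex set $S$ of an acute $0/1$-simplex, $\mathcal{A}^n(S)$ is the set of all $v\in\{0,1\}^n$ such that $S\cup\{v\}$ is the vertex set of an acute $0/1$-simplex with one more vertex. Here a facet of a simplex means the convex hull of any nonempty subset of its vertices (a face of any dimension). *)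

theory Defs
  imports "HOL-Analysis.Analysis"
begin

definition zero_one_points :: "(real ^ 'n) set" where
  "zero_one_points = {x. \<forall>i. x $ i = 0 \<or> x $ i = 1}"

text \<open>Gram condition for an enumeration a 0, ..., a j of the vertices:
  with P = [a 1 - a 0, ..., a j - a 0] and G = P^T P, the matrix M is G^{-1}
  (M G = I on the j x j index range), every off-diagonal entry of M is negative
  and every row sum of M is positive.\<close>
definition gram_acute :: "(nat \<Rightarrow> real ^ 'n) \<Rightarrow> nat \<Rightarrow> bool" where
  "gram_acute a j \<longleftrightarrow>
     (let G = (\<lambda>i l. (a (Suc i) - a 0) \<bullet> (a (Suc l) - a 0)) in
      \<exists>M :: nat \<Rightarrow> nat \<Rightarrow> real.
        (\<forall>i<j. \<forall>l<j. (\<Sum>m<j. M i m * G m l) = (if i = l then 1 else 0)) \<and>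
        (\<forall>i<j. \<forall>l<j. i \<noteq> l \<longrightarrow> M i l < 0) \<and>
        (\<forall>i<j. (\<Sum>l<j. M i l) > 0))"

definition acute_01_simplex :: "(real ^ 'n) set \<Rightarrow> bool" where
  "acute_01_simplex S \<longleftrightarrow>
     finite S \<and> S \<noteq> {} \<and> S \<subseteq> zero_one_points \<and> \<not> affine_dependent S \<and>
     (\<exists>a. bij_betw a {0..card S - 1} S \<and> gram_acute a (card S - 1))"

definition acute_ext :: "(real ^ 'n) set \<Rightarrow> (real ^ 'n) set" where
  "acute_ext S = {v \<in> zero_one_points. v \<notin> S \<and> acute_01_simplex (insert v S)}"

end

theory Submission
  imports Defs
begin

text \<open>
  Write u_i = a_i - a_0 for the edge vectors at the base vertex. The inverse Gram matrix
  condition says exactly that the dual basis d_i of the u_i (in their span) has pairwise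
  negative inner products and positive inner products with D = \<Sum> d_i. In this form two facts
  are elementary: the condition does not depend on the base vertex (for base a_r the new dual
  family is obtained by replacing d_r with -D), and it survives deleting a vertex p (project
  the remaining d_i orthogonally to d_p). Hence every face of an acute simplex is acute.
  Vertex sets of affinely independent sets are recovered from their convex hulls, so conv S
  being a face of conv S' means S \<subseteq> S', and then S \<union> {v} is acute for every v \<in> S' - S.
\<close>

lemma span_image_finite:
  fixes u :: "'i \<Rightarrow> 'a::real_vector"
  assumes "finite I"
  shows "span (u ` I) = range (\<lambda>\<beta>. \<Sum>m\<in>I. \<beta> m *\<^sub>R u m)"
proof
  show "range (\<lambda>\<beta>. \<Sum>m\<in>I. \<beta> m *\<^sub>R u m) \<subseteq> span (u ` I)"
    by (auto intro!: span_sum span_scale intro: span_base)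
  show "span (u ` I) \<subseteq> range (\<lambda>\<beta>. \<Sum>m\<in>I. \<beta> m *\<^sub>R u m)"
    using assms
  proof (induction I rule: finite_induct)
    case empty
    then show ?case by simp
  next
    case (insert i I)
    show ?case
    proof
      fix x assume "x \<in> span (u ` insert i I)"
      then obtain k where "x - k *\<^sub>R u i \<in> span (u ` I)"
        by (auto simp: span_breakdown_eq)
      with insert.IH obtain \<beta> where \<beta>: "x - k *\<^sub>R u i = (\<Sum>m\<in>I. \<beta> m *\<^sub>R u m)"
        by blast
      have "(\<Sum>m\<in>I. (\<beta>(i := k)) m *\<^sub>R u m) = (\<Sum>m\<in>I. \<beta> m *\<^sub>R u m)"
        using insert.hyps(2) by (intro sum.cong) auto
      then have "x = (\<Sum>m\<in>insert i I. (\<beta>(i := k)) m *\<^sub>R u m)"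
        using insert.hyps \<beta> by (simp add: algebra_simps)
      then show "x \<in> range (\<lambda>\<beta>. \<Sum>m\<in>insert i I. \<beta> m *\<^sub>R u m)"
        by blast
    qed
  qed
qed

definition dual_basis :: "('i \<Rightarrow> 'a) \<Rightarrow> ('i \<Rightarrow> 'a::real_inner) \<Rightarrow> 'i set \<Rightarrow> bool" where
  "dual_basis d u I \<longleftrightarrow>
     (\<forall>i\<in>I. d i \<in> span (u ` I)) \<and> (\<forall>i\<in>I. \<forall>l\<in>I. d i \<bullet> u l = (if i = l then 1 else 0))"

definition inverse_gram_acute :: "('i \<Rightarrow> 'a::real_inner) \<Rightarrow> 'i set \<Rightarrow> bool" where
  "inverse_gram_acute u I \<longleftrightarrow>
     (\<exists>M. (\<forall>i\<in>I. \<forall>l\<in>I. (\<Sum>m\<in>I. M i m * (u m \<bullet> u l)) = (if i = l then 1 else 0)) \<and>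
          (\<forall>i\<in>I. \<forall>l\<in>I. i \<noteq> l \<longrightarrow> M i l < 0) \<and> (\<forall>i\<in>I. (\<Sum>l\<in>I. M i l) > 0))"

text \<open>The rows of the inverse Gram matrix are the coordinates of the dual basis, and its
  entries are the inner products d_i \<bullet> d_l.\<close>
definition dual_acute :: "('i \<Rightarrow> 'a::real_inner) \<Rightarrow> 'i set \<Rightarrow> bool" where
  "dual_acute u I \<longleftrightarrow>
     (\<exists>d. dual_basis d u I \<and> (\<forall>i\<in>I. \<forall>l\<in>I. i \<noteq> l \<longrightarrow> d i \<bullet> d l < 0) \<and>
          (\<forall>i\<in>I. d i \<bullet> sum d I > 0))"

lemma dual_basis_coordinate:
  assumes "finite I" "dual_basis d u I" "i \<in> I"
  shows "d i \<bullet> (\<Sum>m\<in>I. \<beta> m *\<^sub>R u m) = \<beta> i"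
proof -
  have "d i \<bullet> (\<Sum>m\<in>I. \<beta> m *\<^sub>R u m) = (\<Sum>m\<in>I. \<beta> m * (if i = m then 1 else 0))"
    using assms(2,3) unfolding dual_basis_def by (auto simp: inner_sum_right intro!: sum.cong)
  also have "\<dots> = \<beta> i"
    using assms(1,3) by (simp add: if_distrib cong: if_cong)
  finally show ?thesis .
qed

lemma dual_basis_inner_coordinates:
  assumes "finite I" "dual_basis d u I" and d: "\<And>i. i \<in> I \<Longrightarrow> d i = (\<Sum>m\<in>I. M i m *\<^sub>R u m)"
    and "i \<in> I" "l \<in> I"
  shows "d i \<bullet> d l = M i l"
  using dual_basis_coordinate[OF assms(1,2) \<open>l \<in> I\<close>, of "M i"]
  by (simp add: d[symmetric] \<open>i \<in> I\<close> inner_commute)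

lemma dual_basis_inner_sum:
  assumes "finite I" "dual_basis d u I" "\<And>i. i \<in> I \<Longrightarrow> d i = (\<Sum>m\<in>I. M i m *\<^sub>R u m)"
    and "i \<in> I"
  shows "d i \<bullet> sum d I = (\<Sum>l\<in>I. M i l)"
  using dual_basis_inner_coordinates[OF assms(1-3) \<open>i \<in> I\<close>]
  by (simp add: inner_sum_right)

lemma inverse_gram_acute_iff_dual_acute:
  assumes fin: "finite I"
  shows "inverse_gram_acute u I \<longleftrightarrow> dual_acute u I"
proof
  assume "inverse_gram_acute u I"
  then obtain M where inv: "\<forall>i\<in>I. \<forall>l\<in>I. (\<Sum>m\<in>I. M i m * (u m \<bullet> u l)) = (if i = l then 1 else 0)"
    and neg: "\<forall>i\<in>I. \<forall>l\<in>I. i \<noteq> l \<longrightarrow> M i l < 0" and pos: "\<forall>i\<in>I. (\<Sum>l\<in>I. M i l) > 0"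
    unfolding inverse_gram_acute_def by blast
  define d where "d i = (\<Sum>m\<in>I. M i m *\<^sub>R u m)" for i
  have "dual_basis d u I"
    using inv unfolding dual_basis_def d_def
    by (auto simp: inner_sum_left intro!: span_sum span_scale intro: span_base)
  have d_eq: "\<And>i. i \<in> I \<Longrightarrow> d i = (\<Sum>m\<in>I. M i m *\<^sub>R u m)"
    by (simp add: d_def)
  have "d i \<bullet> d l < 0" if "i \<in> I" "l \<in> I" "i \<noteq> l" for i l
    using neg that dual_basis_inner_coordinates[OF fin \<open>dual_basis d u I\<close> d_eq] by simp
  moreover have "d i \<bullet> sum d I > 0" if "i \<in> I" for i
    using pos that dual_basis_inner_sum[OF fin \<open>dual_basis d u I\<close> d_eq] by simp
  ultimately show "dual_acute u I"
    unfolding dual_acute_def using \<open>dual_basis d u I\<close> by blast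
next
  assume "dual_acute u I"
  then obtain d where dual: "dual_basis d u I" and neg: "\<forall>i\<in>I. \<forall>l\<in>I. i \<noteq> l \<longrightarrow> d i \<bullet> d l < 0"
    and pos: "\<forall>i\<in>I. d i \<bullet> sum d I > 0"
    unfolding dual_acute_def by blast
  have "\<forall>i\<in>I. \<exists>\<beta>. d i = (\<Sum>m\<in>I. \<beta> m *\<^sub>R u m)"
    using dual span_image_finite[OF fin, of u] unfolding dual_basis_def by blast
  then obtain M where M: "\<And>i. i \<in> I \<Longrightarrow> d i = (\<Sum>m\<in>I. M i m *\<^sub>R u m)"
    by metis
  have "(\<Sum>m\<in>I. M i m * (u m \<bullet> u l)) = (if i = l then 1 else 0)" if "i \<in> I" "l \<in> I" for i l
  proof -
    have "(\<Sum>m\<in>I. M i m * (u m \<bullet> u l)) = d i \<bullet> u l"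
      using M[OF that(1)] by (simp add: inner_sum_left)
    then show ?thesis
      using dual that unfolding dual_basis_def by simp
  qed
  moreover have "M i l < 0" if "i \<in> I" "l \<in> I" "i \<noteq> l" for i l
    using neg that dual_basis_inner_coordinates[OF fin dual M] by simp
  moreover have "(\<Sum>l\<in>I. M i l) > 0" if "i \<in> I" for i
    using pos that dual_basis_inner_sum[OF fin dual M] by simp
  ultimately show "inverse_gram_acute u I"
    unfolding inverse_gram_acute_def by blast
qed

lemma dual_acute_reindex:
  assumes "dual_acute u I" and h: "bij_betw h J I"
  shows "dual_acute (u \<circ> h) J"
proof -
  obtain d where dual: "dual_basis d u I" and neg: "\<forall>i\<in>I. \<forall>l\<in>I. i \<noteq> l \<longrightarrow> d i \<bullet> d l < 0"
    and pos: "\<forall>i\<in>I. d i \<bullet> sum d I > 0"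
    using assms(1) unfolding dual_acute_def by blast
  have maps: "\<And>i. i \<in> J \<Longrightarrow> h i \<in> I" and inj: "inj_on h J" and img: "(u \<circ> h) ` J = u ` I"
    using h by (auto simp: bij_betw_def image_comp[symmetric])
  have "dual_basis (d \<circ> h) (u \<circ> h) J"
    using dual maps inj unfolding dual_basis_def img by (auto simp: inj_on_eq_iff)
  moreover have "sum (d \<circ> h) J = sum d I"
    using sum.reindex_bij_betw[OF h] by simp
  ultimately show ?thesis
    unfolding dual_acute_def using neg pos maps inj by (auto simp: inj_on_eq_iff)
qed

lemma dual_acute_cong:
  assumes "\<And>m. m \<in> I \<Longrightarrow> u m = v m"
  shows "dual_acute u I \<longleftrightarrow> dual_acute v I"
proof -
  have "u ` I = v ` I"
    using assms by auto
  then show ?thesis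
    using assms unfolding dual_acute_def dual_basis_def by auto
qed

lemma dual_acute_reindex_iff:
  assumes h: "bij_betw h J I"
  shows "dual_acute (u \<circ> h) J \<longleftrightarrow> dual_acute u I"
proof
  assume "dual_acute (u \<circ> h) J"
  then have "dual_acute (u \<circ> h \<circ> inv_into J h) I"
    by (rule dual_acute_reindex[OF _ bij_betw_inv_into[OF h]])
  then show "dual_acute u I"
    using dual_acute_cong[of I "u \<circ> h \<circ> inv_into J h" u] h by (simp add: bij_betw_inv_into_right)
qed (rule dual_acute_reindex[OF _ h])

lemma dual_basis_span_Diff:
  assumes fin: "finite I" and dual: "dual_basis d u I" and "p \<in> I"
    and "x \<in> span (u ` I)" "d p \<bullet> x = 0"
  shows "x \<in> span (u ` (I - {p}))"
proof -
  obtain \<beta> where x: "x = (\<Sum>m\<in>I. \<beta> m *\<^sub>R u m)"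
    using assms(4) span_image_finite[OF fin] by blast
  have "\<beta> p = 0"
    using dual_basis_coordinate[OF fin dual \<open>p \<in> I\<close>] x assms(5) by simp
  then have "x = (\<Sum>m\<in>I - {p}. \<beta> m *\<^sub>R u m)"
    using x fin \<open>p \<in> I\<close> by (simp add: sum.remove)
  then show ?thesis
    using span_image_finite[of "I - {p}" u] fin by auto
qed

lemma dual_acute_Diff_singleton:
  assumes fin: "finite I" and "p \<in> I" and "dual_acute u I"
  shows "dual_acute u (I - {p})"
proof -
  obtain d where dual: "dual_basis d u I" and neg: "\<forall>i\<in>I. \<forall>l\<in>I. i \<noteq> l \<longrightarrow> d i \<bullet> d l < 0"
    and pos: "\<forall>i\<in>I. d i \<bullet> sum d I > 0"
    using assms(3) unfolding dual_acute_def by blast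
  define c where "c = d p \<bullet> d p"
  define D where "D = sum d I"
  define e where "e i = d i - (d i \<bullet> d p / c) *\<^sub>R d p" for i
  have "d p \<bullet> u p = 1"
    using dual \<open>p \<in> I\<close> unfolding dual_basis_def by simp
  then have "d p \<noteq> 0"
    by auto
  then have "c > 0"
    by (simp add: c_def)
  have e_orth: "d p \<bullet> e i = 0" for i
    using \<open>c > 0\<close> by (simp add: e_def c_def inner_diff_right inner_commute)
  have e_inner: "e i \<bullet> e l = d i \<bullet> d l - (d i \<bullet> d p) * (d l \<bullet> d p) / c" for i l
    using \<open>c > 0\<close> by (simp add: e_def c_def inner_diff_left inner_diff_right inner_commute field_simps)
  have "sum e (I - {p}) = sum d (I - {p}) - ((sum d (I - {p}) \<bullet> d p) / c) *\<^sub>R d p"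
    by (simp add: e_def sum_subtractf scaleR_sum_left[symmetric] inner_sum_left sum_divide_distrib)
  also have "\<dots> = D - (D \<bullet> d p / c) *\<^sub>R d p"
    using fin \<open>p \<in> I\<close> \<open>c > 0\<close>
    by (simp add: D_def sum_diff1 inner_diff_left c_def diff_divide_distrib scaleR_diff_left)
  finally have sum_e: "sum e (I - {p}) = D - (D \<bullet> d p / c) *\<^sub>R d p" .
  have "dual_basis e u (I - {p})"
    unfolding dual_basis_def
  proof (intro conjI ballI)
    fix i assume i: "i \<in> I - {p}"
    have "e i \<in> span (u ` I)"
      using dual i \<open>p \<in> I\<close> unfolding e_def dual_basis_def by (auto intro!: span_diff span_scale)
    then show "e i \<in> span (u ` (I - {p}))"
      using dual_basis_span_Diff[OF fin dual \<open>p \<in> I\<close>] e_orth by blast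
  next
    fix i l assume "i \<in> I - {p}" "l \<in> I - {p}"
    then show "e i \<bullet> u l = (if i = l then 1 else 0)"
      using dual \<open>p \<in> I\<close> unfolding dual_basis_def by (auto simp: e_def inner_diff_left)
  qed
  moreover have "e i \<bullet> e l < 0" if "i \<in> I - {p}" "l \<in> I - {p}" "i \<noteq> l" for i l
  proof -
    have "d i \<bullet> d p < 0" "d l \<bullet> d p < 0" "d i \<bullet> d l < 0"
      using neg that \<open>p \<in> I\<close> by auto
    moreover have "(d i \<bullet> d p) * (d l \<bullet> d p) / c > 0"
      using \<open>c > 0\<close> calculation by (simp add: mult_neg_neg)
    ultimately show ?thesis
      by (simp add: e_inner)
  qed
  moreover have "e i \<bullet> sum e (I - {p}) > 0" if "i \<in> I - {p}" for i
  proof -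
    have "e i \<bullet> sum e (I - {p}) = e i \<bullet> D"
      using e_orth[of i] by (simp add: sum_e inner_diff_right inner_commute)
    also have "\<dots> = d i \<bullet> D - (d i \<bullet> d p / c) * (d p \<bullet> D)"
      by (simp add: e_def inner_diff_left)
    finally have "e i \<bullet> sum e (I - {p}) = d i \<bullet> D - (d i \<bullet> d p / c) * (d p \<bullet> D)" .
    moreover have "d i \<bullet> D > 0" "d p \<bullet> D > 0" "d i \<bullet> d p < 0"
      using pos neg that \<open>p \<in> I\<close> by (auto simp: D_def)
    moreover have "(d i \<bullet> d p / c) * (d p \<bullet> D) < 0"
      using \<open>c > 0\<close> calculation by (simp add: mult_neg_pos divide_neg_pos)
    ultimately show ?thesis
      by linarith
  qed
  ultimately show ?thesis
    unfolding dual_acute_def by blast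
qed

lemma dual_acute_subset:
  assumes "finite I" "dual_acute u I" "J \<subseteq> I"
  shows "dual_acute u J"
proof -
  have "dual_acute u (I - R)" if "finite R" for R
    using that
  proof (induction R rule: finite_induct)
    case empty
    then show ?case using assms(2) by simp
  next
    case (insert p R)
    show ?case
    proof (cases "p \<in> I - R")
      case True
      then have "dual_acute u (I - R - {p})"
        using dual_acute_Diff_singleton[OF _ True insert.IH] assms(1) by blast
      moreover have "I - R - {p} = I - insert p R"
        by blast
      ultimately show ?thesis by simp
    next
      case False
      then have "I - insert p R = I - R"
        by blast
      then show ?thesis using insert.IH by simp
    qed
  qed
  moreover have "I - (I - J) = J"
    using assms(3) by blast
  ultimately show ?thesis
    using assms(1) by (metis finite_Diff)
qed

lemma dual_basis_change_base:
  fixes K :: "'a::real_inner set"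
  assumes fin: "finite K" and "q \<in> K" "r \<in> K" "r \<noteq> q"
    and dual: "dual_basis d (\<lambda>x. x - q) (K - {q})"
  shows "dual_basis (\<lambda>x. if x = q then - sum d (K - {q}) else d x) (\<lambda>x. x - r) (K - {r})"
proof -
  define D where "D = sum d (K - {q})"
  have d_edge: "d i \<bullet> (x - q) = (if i = x then 1 else 0)" if "i \<in> K - {q}" "x \<in> K" for i x
    using dual that unfolding dual_basis_def by (cases "x = q") auto
  have D_edge: "D \<bullet> (x - q) = (if x = q then 0 else 1)" if "x \<in> K" for x
  proof -
    have "D \<bullet> (x - q) = (\<Sum>i\<in>K - {q}. if i = x then 1 else 0)"
      unfolding D_def inner_sum_left using that by (intro sum.cong) (auto simp: d_edge)
    then show ?thesis
      using fin that by simp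
  qed
  have edge_span: "x - r \<in> span ((\<lambda>x. x - r) ` (K - {r}))" if "x \<in> K" for x
    using that by (cases "x = r") (auto intro: span_base span_zero)
  have "(\<lambda>x. x - q) ` (K - {q}) \<subseteq> span ((\<lambda>x. x - r) ` (K - {r}))"
  proof
    fix y assume "y \<in> (\<lambda>x. x - q) ` (K - {q})"
    then obtain x where "x \<in> K" "y = (x - r) - (q - r)"
      by auto
    then show "y \<in> span ((\<lambda>x. x - r) ` (K - {r}))"
      using span_diff edge_span \<open>q \<in> K\<close> by metis
  qed
  then have span_sub: "span ((\<lambda>x. x - q) ` (K - {q})) \<subseteq> span ((\<lambda>x. x - r) ` (K - {r}))"
    by (rule span_minimal[OF _ subspace_span])
  have "D \<in> span ((\<lambda>x. x - q) ` (K - {q}))"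
    using dual unfolding D_def dual_basis_def by (auto intro: span_sum)
  then have "(if x = q then - D else d x) \<in> span ((\<lambda>x. x - r) ` (K - {r}))" if "x \<in> K - {r}" for x
    using dual that span_sub unfolding dual_basis_def by (auto intro: span_neg)
  moreover have "(if i = q then - D else d i) \<bullet> (l - r) = (if i = l then 1 else 0)"
    if "i \<in> K - {r}" "l \<in> K - {r}" for i l
  proof -
    have rebase: "y \<bullet> (l - r) = y \<bullet> (l - q) - y \<bullet> (r - q)" for y :: 'a
      by (simp add: inner_diff_right)
    show ?thesis
      unfolding rebase using that \<open>q \<in> K\<close> \<open>r \<in> K\<close> \<open>r \<noteq> q\<close>
      by (cases "i = q") (simp_all add: d_edge D_edge)
  qed
  ultimately show ?thesis
    unfolding dual_basis_def D_def by blast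
qed

lemma dual_acute_change_base:
  fixes K :: "'a::real_inner set"
  assumes fin: "finite K" and "q \<in> K" "r \<in> K" and "dual_acute (\<lambda>x. x - q) (K - {q})"
  shows "dual_acute (\<lambda>x. x - r) (K - {r})"
proof (cases "r = q")
  case True
  then show ?thesis using assms(4) by simp
next
  case False
  obtain d where dual: "dual_basis d (\<lambda>x. x - q) (K - {q})"
    and neg: "\<forall>i\<in>K - {q}. \<forall>l\<in>K - {q}. i \<noteq> l \<longrightarrow> d i \<bullet> d l < 0"
    and pos: "\<forall>i\<in>K - {q}. d i \<bullet> sum d (K - {q}) > 0"
    using assms(4) unfolding dual_acute_def by blast
  define D where "D = sum d (K - {q})"
  define e where "e = (\<lambda>x. if x = q then - D else d x)"
  have "dual_basis e (\<lambda>x. x - r) (K - {r})"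
    unfolding e_def D_def by (rule dual_basis_change_base[OF fin assms(2,3) False dual])
  have "K - {r} = insert q (K - {q} - {r})"
    using \<open>q \<in> K\<close> False by auto
  then have "sum e (K - {r}) = e q + sum e (K - {q} - {r})"
    using fin by simp
  also have "sum e (K - {q} - {r}) = sum d (K - {q} - {r})"
    by (intro sum.cong) (auto simp: e_def)
  also have "\<dots> = D - d r"
    using fin \<open>r \<in> K\<close> False by (simp add: D_def sum_diff1)
  finally have sum_e: "sum e (K - {r}) = - d r"
    by (simp add: e_def)
  have "e i \<bullet> e l < 0" if "i \<in> K - {r}" "l \<in> K - {r}" "i \<noteq> l" for i l
    using that neg pos by (auto simp: e_def D_def inner_commute)
  moreover have "e i \<bullet> sum e (K - {r}) > 0" if "i \<in> K - {r}" for i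
    unfolding sum_e using that neg pos \<open>r \<in> K\<close> False by (auto simp: e_def D_def inner_commute)
  ultimately show ?thesis
    unfolding dual_acute_def using \<open>dual_basis e (\<lambda>x. x - r) (K - {r})\<close> by blast
qed

lemma gram_acute_iff_dual_acute:
  assumes a: "bij_betw a {0..j} S"
  shows "gram_acute a j \<longleftrightarrow> dual_acute (\<lambda>x. x - a 0) (S - {a 0})"
proof -
  have "a 0 \<in> S"
    using a by (auto simp: bij_betw_def)
  then have "bij_betw a ({0..j} - {0}) (S - {a 0})"
    using bij_betw_DiffI[OF a, of "{0}" "{a 0}"] by simp
  moreover have "{0..j} - {0} = Suc ` {..<j}"
    by (auto simp: image_Suc_lessThan)
  ultimately have "bij_betw (a \<circ> Suc) {..<j} (S - {a 0})"
    by (intro bij_betw_trans[of Suc]) simp_all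
  then have "dual_acute ((\<lambda>x. x - a 0) \<circ> (a \<circ> Suc)) {..<j} \<longleftrightarrow> dual_acute (\<lambda>x. x - a 0) (S - {a 0})"
    by (rule dual_acute_reindex_iff)
  moreover have "gram_acute a j \<longleftrightarrow> inverse_gram_acute (\<lambda>i. a (Suc i) - a 0) {..<j}"
    unfolding gram_acute_def inverse_gram_acute_def Let_def by (simp only: Ball_def lessThan_iff)
  ultimately show ?thesis
    using inverse_gram_acute_iff_dual_acute[of "{..<j}" "\<lambda>i. a (Suc i) - a 0"]
    by (simp add: comp_def)
qed

lemma acute_01_simplex_iff:
  "acute_01_simplex S \<longleftrightarrow>
     finite S \<and> S \<noteq> {} \<and> S \<subseteq> zero_one_points \<and> \<not> affine_dependent S \<and>
     (\<forall>b\<in>S. dual_acute (\<lambda>x. x - b) (S - {b}))"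
proof
  assume S: "acute_01_simplex S"
  then obtain a where a: "bij_betw a {0..card S - 1} S" and "gram_acute a (card S - 1)"
    unfolding acute_01_simplex_def by blast
  then have base: "dual_acute (\<lambda>x. x - a 0) (S - {a 0})"
    by (simp add: gram_acute_iff_dual_acute)
  have "a 0 \<in> S"
    using a by (auto simp: bij_betw_def)
  have "finite S"
    using S unfolding acute_01_simplex_def by blast
  have "dual_acute (\<lambda>x. x - b) (S - {b})" if "b \<in> S" for b
    by (rule dual_acute_change_base[OF \<open>finite S\<close> \<open>a 0 \<in> S\<close> that base])
  then show "finite S \<and> S \<noteq> {} \<and> S \<subseteq> zero_one_points \<and> \<not> affine_dependent S \<and>
     (\<forall>b\<in>S. dual_acute (\<lambda>x. x - b) (S - {b}))"
    using S unfolding acute_01_simplex_def by blast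
next
  assume S: "finite S \<and> S \<noteq> {} \<and> S \<subseteq> zero_one_points \<and> \<not> affine_dependent S \<and>
     (\<forall>b\<in>S. dual_acute (\<lambda>x. x - b) (S - {b}))"
  then obtain a where "bij_betw a {0..<card S} S"
    using ex_bij_betw_nat_finite by blast
  moreover have "card S > 0"
    using S by (auto simp: card_gt_0_iff)
  then have "{0..<card S} = {0..card S - 1}"
    by auto
  ultimately have a: "bij_betw a {0..card S - 1} S"
    by simp
  then have "a 0 \<in> S"
    by (auto simp: bij_betw_def)
  then have "gram_acute a (card S - 1)"
    using S gram_acute_iff_dual_acute[OF a] by blast
  then show "acute_01_simplex S"
    using S a unfolding acute_01_simplex_def by blast
qed

lemma acute_01_simplex_subset:
  assumes "acute_01_simplex S" "F \<subseteq> S" "F \<noteq> {}"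
  shows "acute_01_simplex F"
proof -
  have "dual_acute (\<lambda>x. x - b) (F - {b})" if "b \<in> F" for b
    using assms that dual_acute_subset[of "S - {b}" "\<lambda>x. x - b" "F - {b}"]
    unfolding acute_01_simplex_iff by blast
  then show ?thesis
    using assms affine_independent_subset finite_subset
    unfolding acute_01_simplex_iff by blast
qed

lemma affine_independent_convex_hull_eq:
  fixes S T :: "'a::euclidean_space set"
  assumes "\<not> affine_dependent S" "\<not> affine_dependent T" "convex hull S = convex hull T"
  shows "S = T"
proof -
  have "x \<in> S \<longleftrightarrow> x \<in> T" for x
    using extreme_point_of_convex_hull_affine_independent[OF assms(1), of x]
      extreme_point_of_convex_hull_affine_independent[OF assms(2), of x] assms(3)
    by simp
  then show ?thesis
    by blast
qed

theorem theorem5p12: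
  fixes S S' :: "(real ^ 'n) set" and k :: nat
  assumes "acute_01_simplex S"
    and "card S = k"
    and "acute_01_simplex S'"
    and "\<exists>T. T \<subseteq> S' \<and> T \<noteq> {} \<and> convex hull S = convex hull T"
  shows "\<forall>v \<in> S'. v \<in> S \<or> v \<in> acute_ext S"
proof
  fix v assume "v \<in> S'"
  obtain T where T: "T \<subseteq> S'" "convex hull S = convex hull T"
    using assms(4) by blast
  have "\<not> affine_dependent T"
    using assms(3) affine_independent_subset[OF _ T(1)] unfolding acute_01_simplex_def by blast
  moreover have "\<not> affine_dependent S"
    using assms(1) unfolding acute_01_simplex_def by blast
  ultimately have "S = T"
    using affine_independent_convex_hull_eq T(2) by blast
  then have "acute_01_simplex (insert v S)"
    using acute_01_simplex_subset[OF assms(3)] T(1) \<open>v \<in> S'\<close> by blast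
  then show "v \<in> S \<or> v \<in> acute_ext S"
    using \<open>v \<in> S'\<close> assms(3) unfolding acute_ext_def acute_01_simplex_def by blast
qed

end
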